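(* Let $(E,d)$ be a Polish space and $\mu\in(0,1)$. For any $f\in D^{\mu}([0,1],E)$, \[ \tfrac12[f]_{\sim\mu}\le[f]_{\mu}\le 2[f]_{\sim\mu}. \]
   Context: $D([0,1],E)$ is the space of càdlàg $E$-valued functions on $[0,1]$. For $0\le s\le t\le u\le 1$, $\Delta(f;s,t,u)=d(f(s),f(t))\wedge d(f(t),f(u))$, and $[f]_\mu=\sup_{0\le s\le t\le u\le 1}\frac{\Delta(f;s,t,u)}{|u-s|^\mu}$. $D^{\mu}([0,1],E)$ is the set of $f\in D([0,1],E)$ with $[f]_\mu+\sup_{t\in(0,1]}\frac{d(f(0),f(t))}{t^\mu}+\sup_{t\in[0,1)}\frac{d(f(1),f(t))}{|1-t|^\mu}<\infty$. For $0\le\sigma<\tau\le1$, $N(f;(\sigma,\tau))=\inf_{\sigma<\theta\le\tau}\sup_{s\in[\sigma,\theta),\,u\in[\theta,\tau]}\left[d(f(\sigma),f(s))\vee d(f(u),f(\tau))\right]$; for $\eta>0$, $N(f;\eta)=\sup_{0\le\sigma<\tau\le 1,\ \tau-\sigma\le\eta}N(f;(\sigma,\tau))$; and $[f]_{\sim\mu}=\sup_{\eta>0}\frac{N(f;\eta)}{\eta^\mu}$. *)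

theory Defs
  imports "HOL-Analysis.Analysis"
begin

text \<open>Functions on [0,1] are represented as total functions real => E; only values on [0,1] matter.
  The metric d is the metric dist of the type class polish_space.\<close>

definition cadlag01 :: "(real \<Rightarrow> 'a::metric_space) \<Rightarrow> bool" where
  "cadlag01 f \<longleftrightarrow>
     (\<forall>t\<in>{0..<1}. continuous (at_right t) f) \<and>
     (\<forall>t\<in>{0<..1}. \<exists>l. (f \<longlongrightarrow> l) (at_left t))"

definition Delta3 :: "(real \<Rightarrow> 'a::metric_space) \<Rightarrow> real \<Rightarrow> real \<Rightarrow> real \<Rightarrow> real" where
  "Delta3 f s t u = min (dist (f s) (f t)) (dist (f t) (f u))"

text \<open>[f]_mu (for s = u the quotient is 0 = Delta, harmless).\<close>
definition holder_semi :: "real \<Rightarrow> (real \<Rightarrow> 'a::metric_space) \<Rightarrow> ereal" where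
  "holder_semi mu f = (SUP (s,t,u)\<in>{(s,t,u). 0 \<le> s \<and> s \<le> t \<and> t \<le> u \<and> u \<le> 1}.
       ereal (Delta3 f s t u / \<bar>u - s\<bar> powr mu))"

definition Dmu :: "real \<Rightarrow> (real \<Rightarrow> 'a::metric_space) set" where
  "Dmu mu = {f. cadlag01 f \<and>
      holder_semi mu f
      + (SUP t\<in>{0<..1}. ereal (dist (f 0) (f t) / t powr mu))
      + (SUP t\<in>{0..<1}. ereal (dist (f 1) (f t) / \<bar>1 - t\<bar> powr mu)) < \<infinity>}"

definition Nint :: "(real \<Rightarrow> 'a::metric_space) \<Rightarrow> real \<Rightarrow> real \<Rightarrow> ereal" where
  "Nint f \<sigma> \<tau> = (INF \<theta>\<in>{\<sigma><..\<tau>}.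
      SUP (s,u)\<in>{\<sigma>..<\<theta>} \<times> {\<theta>..\<tau>}. ereal (max (dist (f \<sigma>) (f s)) (dist (f u) (f \<tau>))))"

definition Neta :: "(real \<Rightarrow> 'a::metric_space) \<Rightarrow> real \<Rightarrow> ereal" where
  "Neta f \<eta> = (SUP (\<sigma>,\<tau>)\<in>{(\<sigma>,\<tau>). 0 \<le> \<sigma> \<and> \<sigma> < \<tau> \<and> \<tau> \<le> 1 \<and> \<tau> - \<sigma> \<le> \<eta>}. Nint f \<sigma> \<tau>)"

definition tilde_semi :: "real \<Rightarrow> (real \<Rightarrow> 'a::metric_space) \<Rightarrow> ereal" where
  "tilde_semi mu f = (SUP \<eta>\<in>{0<..}. Neta f \<eta> / ereal (\<eta> powr mu))"

end

theory Submission
  imports Defs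
begin

text \<open>For \<open>[f]\<^sub>\<mu> \<le> [f]\<^sub>~\<^sub>\<mu>\<close>: whatever split point \<open>\<theta>\<close> of \<open>[s,u]\<close> is chosen, the middle
  point \<open>t\<close> lies on one side of it, so \<open>\<Delta>(f;s,t,u) \<le> N(f;(s,u))\<close>.
  For \<open>[f]\<^sub>~\<^sub>\<mu> \<le> 2[f]\<^sub>\<mu>\<close>: if \<open>\<Delta> \<le> L\<close> on \<open>[\<sigma>,\<tau>]\<close>, split at the first time \<open>\<theta>\<close> where \<open>f\<close>
  moves away from \<open>f(\<sigma>)\<close> by more than \<open>L\<close>. Before \<open>\<theta>\<close> the oscillation from \<open>f(\<sigma>)\<close> is small;
  after a point \<open>t\<close> where it is large, the bound on \<open>\<Delta>(f;\<sigma>,t,u)\<close> forces \<open>f(u)\<close> to stay within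
  \<open>L\<close> of \<open>f(t)\<close>, so \<open>f(u)\<close> and \<open>f(\<tau>)\<close> are \<open>2L\<close>-close. Right continuity handles \<open>\<theta>\<close> itself
  and guarantees \<open>\<theta> > \<sigma>\<close>.\<close>

lemma cadlag01_eventually_at_right:
  assumes "cadlag01 f" "0 \<le> x" "x < 1" "0 < e"
  shows "\<exists>b>x. \<forall>y. x < y \<and> y < b \<longrightarrow> dist (f y) (f x) < e"
proof -
  have "(f \<longlongrightarrow> f x) (at_right x)"
    using assms(1-3) unfolding cadlag01_def by (simp add: continuous_within)
  hence "eventually (\<lambda>y. dist (f y) (f x) < e) (at_right x)"
    using assms(4) by (rule tendstoD)
  thus ?thesis unfolding eventually_at_right_field by blast
qed

lemma le_at_Inf_if_continuous_at_right:
  fixes g :: "real \<Rightarrow> real" and S :: "real set"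
  assumes "continuous (at_right (Inf S)) g" "S \<noteq> {}" "bdd_below S" "Inf S \<notin> S"
    and "\<And>t. t \<in> S \<Longrightarrow> g t \<le> c"
  shows "g (Inf S) \<le> c"
proof (rule ccontr)
  assume "\<not> g (Inf S) \<le> c"
  moreover have "(g \<longlongrightarrow> g (Inf S)) (at_right (Inf S))"
    using assms(1) by (simp add: continuous_within)
  ultimately have "eventually (\<lambda>y. c < g y) (at_right (Inf S))"
    by (intro order_tendstoD) auto
  then obtain b where b: "Inf S < b" "\<And>y. Inf S < y \<Longrightarrow> y < b \<Longrightarrow> c < g y"
    unfolding eventually_at_right_field by blast
  obtain t where t: "t \<in> S" "t < b"
    using cInf_lessD[OF assms(2) b(1)] by blast
  have "Inf S < t"
    using cInf_lower[OF t(1) assms(3)] t(1) assms(4) by (cases "t = Inf S") auto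
  thus False using b(2) t assms(5) by force
qed

lemma Nint_le_of_split:
  assumes "\<sigma> < \<theta>" "\<theta> \<le> \<tau>"
    and "\<And>s u. \<sigma> \<le> s \<Longrightarrow> s < \<theta> \<Longrightarrow> \<theta> \<le> u \<Longrightarrow> u \<le> \<tau> \<Longrightarrow>
           dist (f \<sigma>) (f s) \<le> c \<and> dist (f u) (f \<tau>) \<le> c"
  shows "Nint f \<sigma> \<tau> \<le> ereal c"
  unfolding Nint_def
  by (rule INF_lower2[of \<theta>]) (use assms in \<open>auto intro!: SUP_least\<close>)

text \<open>\<open>\<tau>\<close> is added so that \<open>first_exit\<close> is \<open>\<tau>\<close> when \<open>f\<close> never leaves the ball.\<close>
definition exit_times :: "(real \<Rightarrow> 'a::metric_space) \<Rightarrow> real \<Rightarrow> real \<Rightarrow> real \<Rightarrow> real set" where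
  "exit_times f \<sigma> \<tau> r = {t\<in>{\<sigma><..\<tau>}. r < dist (f \<sigma>) (f t)} \<union> {\<tau>}"

definition first_exit :: "(real \<Rightarrow> 'a::metric_space) \<Rightarrow> real \<Rightarrow> real \<Rightarrow> real \<Rightarrow> real" where
  "first_exit f \<sigma> \<tau> r = Inf (exit_times f \<sigma> \<tau> r)"

lemma exit_times_bounds:
  assumes "\<sigma> < \<tau>" "t \<in> exit_times f \<sigma> \<tau> r"
  shows "\<sigma> < t" "t \<le> \<tau>"
  using assms by (auto simp: exit_times_def)

lemma bdd_below_exit_times: "\<sigma> < \<tau> \<Longrightarrow> bdd_below (exit_times f \<sigma> \<tau> r)"
  by (rule bdd_belowI[of _ \<sigma>]) (use exit_times_bounds in force)

lemma first_exit_le: "\<sigma> < \<tau> \<Longrightarrow> t \<in> exit_times f \<sigma> \<tau> r \<Longrightarrow> first_exit f \<sigma> \<tau> r \<le> t"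
  unfolding first_exit_def by (rule cInf_lower) (simp_all add: bdd_below_exit_times)

lemma first_exit_le_end: "\<sigma> < \<tau> \<Longrightarrow> first_exit f \<sigma> \<tau> r \<le> \<tau>"
  by (rule first_exit_le) (simp_all add: exit_times_def)

lemma first_exit_gt_start:
  assumes "cadlag01 f" "0 \<le> \<sigma>" "\<sigma> < \<tau>" "\<tau> \<le> 1" "0 < r"
  shows "\<sigma> < first_exit f \<sigma> \<tau> r"
proof -
  obtain b where b: "\<sigma> < b" "\<And>y. \<sigma> < y \<Longrightarrow> y < b \<Longrightarrow> dist (f y) (f \<sigma>) < r"
    using cadlag01_eventually_at_right[OF assms(1,2) _ assms(5)] assms(3,4) by auto
  have "min b \<tau> \<le> t" if "t \<in> exit_times f \<sigma> \<tau> r" for t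
    using that b by (force simp: exit_times_def dist_commute not_less)
  hence "min b \<tau> \<le> first_exit f \<sigma> \<tau> r"
    unfolding first_exit_def by (intro cInf_greatest) (auto simp: exit_times_def)
  thus ?thesis using b(1) assms(3) by linarith
qed

lemma dist_start_le_before_first_exit:
  assumes "0 \<le> r" "\<sigma> < \<tau>" "\<sigma> \<le> s" "s < first_exit f \<sigma> \<tau> r"
  shows "dist (f \<sigma>) (f s) \<le> r"
proof (cases "s = \<sigma>")
  case False
  have "s \<notin> exit_times f \<sigma> \<tau> r"
    using first_exit_le[OF assms(2)] assms(4) by force
  thus ?thesis using assms False first_exit_le_end[OF assms(2), of f r] by (auto simp: exit_times_def)
qed (use assms(1) in simp)

lemma dist_le_after_exit:
  assumes "\<sigma> < \<tau>" "L \<le> r" "0 \<le> L" "t \<in> exit_times f \<sigma> \<tau> r" "t \<le> u" "u \<le> \<tau>"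
    and "\<And>s t u. \<sigma> \<le> s \<Longrightarrow> s \<le> t \<Longrightarrow> t \<le> u \<Longrightarrow> u \<le> \<tau> \<Longrightarrow> Delta3 f s t u \<le> L"
  shows "dist (f t) (f u) \<le> L"
proof (cases "t = \<tau>")
  case False
  with assms(2,4) have "L < dist (f \<sigma>) (f t)" "\<sigma> < t"
    by (auto simp: exit_times_def)
  moreover have "Delta3 f \<sigma> t u \<le> L"
    using assms(5,6) \<open>\<sigma> < t\<close> by (intro assms(7)) auto
  ultimately show ?thesis by (simp add: Delta3_def)
qed (use assms(3,5,6) in simp)

lemma dist_end_le_after_first_exit:
  fixes f :: "real \<Rightarrow> 'a::metric_space"
  assumes cad: "cadlag01 f" and "0 \<le> \<sigma>" "\<sigma> < \<tau>" "\<tau> \<le> 1" "0 \<le> L" "L < r"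
    and Delta: "\<And>s t u. \<sigma> \<le> s \<Longrightarrow> s \<le> t \<Longrightarrow> t \<le> u \<Longrightarrow> u \<le> \<tau> \<Longrightarrow> Delta3 f s t u \<le> L"
    and u: "first_exit f \<sigma> \<tau> r \<le> u" "u \<le> \<tau>"
  shows "dist (f u) (f \<tau>) \<le> 2 * L"
proof -
  define S where "S = exit_times f \<sigma> \<tau> r"
  have after: "dist (f v) (f \<tau>) \<le> 2 * L" if "t \<in> S" "t \<le> v" "v \<le> \<tau>" for t v
  proof -
    note jump = dist_le_after_exit[OF assms(3) less_imp_le[OF assms(6)] assms(5) that(1)[unfolded S_def]]
    have "dist (f v) (f \<tau>) \<le> dist (f t) (f v) + dist (f t) (f \<tau>)"
      by (metis dist_commute dist_triangle)
    also have "\<dots> \<le> L + L"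
      using jump[OF that(2,3) Delta] jump[OF _ order_refl Delta] that by (intro add_mono) auto
    finally show ?thesis by simp
  qed
  show ?thesis
  proof (cases "\<exists>t\<in>S. t \<le> u")
    case True
    thus ?thesis using after u(2) by blast
  next
    case False
    have "S \<noteq> {}" "bdd_below S"
      using bdd_below_exit_times[OF assms(3)] by (simp_all add: S_def exit_times_def)
    have "u = Inf S"
    proof (rule ccontr)
      assume "u \<noteq> Inf S"
      with u(1) have "Inf S < u" by (simp add: S_def first_exit_def)
      with False show False using cInf_lessD[OF \<open>S \<noteq> {}\<close>] by force
    qed
    have "Inf S \<notin> S" "Inf S < 1"
      using False \<open>u = Inf S\<close> u(2) assms(4) by (auto simp: S_def exit_times_def)
    moreover have "0 \<le> Inf S"
      using first_exit_gt_start[OF cad assms(2-4), of r] assms(2,5,6) by (simp add: S_def first_exit_def)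
    ultimately have "continuous (at_right (Inf S)) (\<lambda>u. dist (f u) (f \<tau>))"
      using cad unfolding cadlag01_def by (intro continuous_intros) auto
    have "dist (f t) (f \<tau>) \<le> 2 * L" if "t \<in> S" for t
      using after[OF that order_refl exit_times_bounds(2)[OF assms(3) that[unfolded S_def]]] .
    from le_at_Inf_if_continuous_at_right[OF \<open>continuous _ _\<close> \<open>S \<noteq> {}\<close> \<open>bdd_below S\<close>
        \<open>Inf S \<notin> S\<close> this]
    show ?thesis using \<open>u = Inf S\<close> by simp
  qed
qed

lemma Nint_le_max:
  fixes f :: "real \<Rightarrow> 'a::metric_space"
  assumes "cadlag01 f" "0 \<le> \<sigma>" "\<sigma> < \<tau>" "\<tau> \<le> 1" "0 \<le> L" "L < r"
    and "\<And>s t u. \<sigma> \<le> s \<Longrightarrow> s \<le> t \<Longrightarrow> t \<le> u \<Longrightarrow> u \<le> \<tau> \<Longrightarrow> Delta3 f s t u \<le> L"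
  shows "Nint f \<sigma> \<tau> \<le> ereal (max r (2 * L))"
proof (rule Nint_le_of_split)
  show "\<sigma> < first_exit f \<sigma> \<tau> r" "first_exit f \<sigma> \<tau> r \<le> \<tau>"
    using assms by (simp_all add: first_exit_gt_start first_exit_le_end)
  fix s u
  assume "\<sigma> \<le> s" "s < first_exit f \<sigma> \<tau> r" "first_exit f \<sigma> \<tau> r \<le> u" "u \<le> \<tau>"
  thus "dist (f \<sigma>) (f s) \<le> max r (2 * L) \<and> dist (f u) (f \<tau>) \<le> max r (2 * L)"
    using dist_start_le_before_first_exit[of r \<sigma> \<tau> s f]
      dist_end_le_after_first_exit[OF assms, of u] assms(3,5,6) by auto
qed

lemma Nint_le_twice:
  fixes f :: "real \<Rightarrow> 'a::metric_space"
  assumes "cadlag01 f" "0 \<le> \<sigma>" "\<sigma> < \<tau>" "\<tau> \<le> 1" "0 \<le> L"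
    and "\<And>s t u. \<sigma> \<le> s \<Longrightarrow> s \<le> t \<Longrightarrow> t \<le> u \<Longrightarrow> u \<le> \<tau> \<Longrightarrow> Delta3 f s t u \<le> L"
  shows "Nint f \<sigma> \<tau> \<le> ereal (2 * L)"
proof (rule ereal_le_epsilon2)
  fix e :: real assume "0 < e"
  hence "Nint f \<sigma> \<tau> \<le> ereal (max (L + e) (2 * L))"
    using assms by (intro Nint_le_max) auto
  also have "\<dots> \<le> ereal (2 * L) + ereal e"
    using assms(5) \<open>0 < e\<close> by simp
  finally show "Nint f \<sigma> \<tau> \<le> ereal (2 * L) + ereal e" .
qed

lemma Delta3_le_Nint:
  assumes "s \<le> t" "t \<le> u" "s < u"
  shows "ereal (Delta3 f s t u) \<le> Nint f s u"
  unfolding Nint_def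
proof (rule INF_greatest)
  fix \<theta> assume "\<theta> \<in> {s<..u}"
  show "ereal (Delta3 f s t u) \<le>
        (SUP (s',u')\<in>{s..<\<theta>} \<times> {\<theta>..u}. ereal (max (dist (f s) (f s')) (dist (f u') (f u))))"
  proof (cases "t < \<theta>")
    case True
    show ?thesis
      by (rule SUP_upper2[where i="(t,u)"]) (use True \<open>\<theta> \<in> _\<close> assms in \<open>auto simp: Delta3_def\<close>)
  next
    case False
    show ?thesis
      by (rule SUP_upper2[where i="(s,t)"]) (use False \<open>\<theta> \<in> _\<close> assms in \<open>auto simp: Delta3_def\<close>)
  qed
qed

lemma Delta3_quotient_le_tilde_semi:
  assumes "0 \<le> s" "s \<le> t" "t \<le> u" "u \<le> 1" "s < u"
  shows "ereal (Delta3 f s t u / \<bar>u - s\<bar> powr mu) \<le> tilde_semi mu f"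
proof -
  have pos: "0 < (u - s) powr mu" using assms by simp
  have "ereal (Delta3 f s t u) \<le> Neta f (u - s)"
    unfolding Neta_def
    by (rule order_trans[OF Delta3_le_Nint[OF assms(2,3,5)]], rule SUP_upper2[where i="(s,u)"])
       (use assms in auto)
  hence "ereal (Delta3 f s t u) / ereal ((u - s) powr mu) \<le> Neta f (u - s) / ereal ((u - s) powr mu)"
    using pos by (intro ereal_divide_right_mono) auto
  also have "\<dots> \<le> tilde_semi mu f"
    unfolding tilde_semi_def by (rule SUP_upper2[where i="u - s"]) (use assms in auto)
  finally show ?thesis using pos assms by simp
qed

lemma tilde_semi_nonneg: "0 \<le> tilde_semi mu f"
  using Delta3_quotient_le_tilde_semi[of 0 0 1 f mu] by (simp add: Delta3_def zero_ereal_def)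

lemma holder_semi_nonneg: "0 \<le> holder_semi mu f"
  unfolding holder_semi_def
  by (rule SUP_upper2[where i="(0,0,0)"]) (auto simp: Delta3_def)

lemma holder_semi_le_tilde_semi: "holder_semi mu f \<le> tilde_semi mu f"
  unfolding holder_semi_def
proof (rule SUP_least, clarify)
  fix s t u :: real assume "0 \<le> s" "s \<le> t" "t \<le> u" "u \<le> 1"
  thus "ereal (Delta3 f s t u / \<bar>u - s\<bar> powr mu) \<le> tilde_semi mu f"
    using Delta3_quotient_le_tilde_semi[of s t u f mu] tilde_semi_nonneg[of mu f]
    by (cases "s = u") (auto simp: Delta3_def zero_ereal_def)
qed

lemma Delta3_le_holder_semi:
  assumes "holder_semi mu f = ereal H" "0 \<le> s" "s \<le> t" "t \<le> u" "u \<le> 1"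
  shows "Delta3 f s t u \<le> H * (u - s) powr mu"
proof (cases "s = u")
  case False
  have pos: "0 < (u - s) powr mu" using assms False by simp
  have "ereal (Delta3 f s t u / \<bar>u - s\<bar> powr mu) \<le> holder_semi mu f"
    unfolding holder_semi_def by (rule SUP_upper2[where i="(s,t,u)"]) (use assms in auto)
  hence "Delta3 f s t u / (u - s) powr mu \<le> H" using assms by simp
  thus ?thesis using pos by (simp add: divide_le_eq mult.commute)
qed (use assms in \<open>simp add: Delta3_def\<close>)

lemma Neta_le_holder_semi:
  fixes f :: "real \<Rightarrow> 'a::metric_space"
  assumes cad: "cadlag01 f" and "0 \<le> mu" and H: "holder_semi mu f = ereal H"
  shows "Neta f \<eta> \<le> ereal (2 * H * \<eta> powr mu)"
  unfolding Neta_def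
proof (rule SUP_least, clarify)
  fix \<sigma> \<tau> :: real assume st: "0 \<le> \<sigma>" "\<sigma> < \<tau>" "\<tau> \<le> 1" "\<tau> - \<sigma> \<le> \<eta>"
  have H0: "0 \<le> H" using holder_semi_nonneg[of mu f] H by simp
  have "Nint f \<sigma> \<tau> \<le> ereal (2 * (H * (\<tau> - \<sigma>) powr mu))"
  proof (rule Nint_le_twice[OF cad st(1-3)])
    fix s t u assume "\<sigma> \<le> s" "s \<le> t" "t \<le> u" "u \<le> \<tau>"
    hence "Delta3 f s t u \<le> H * (u - s) powr mu"
      using Delta3_le_holder_semi[OF H] st by simp
    also have "\<dots> \<le> H * (\<tau> - \<sigma>) powr mu"
      using H0 \<open>\<sigma> \<le> s\<close> \<open>u \<le> \<tau>\<close> \<open>s \<le> t\<close> \<open>t \<le> u\<close> assms(2)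
      by (intro mult_left_mono powr_mono2) auto
    finally show "Delta3 f s t u \<le> H * (\<tau> - \<sigma>) powr mu" .
  qed (use H0 in simp)
  also have "\<dots> \<le> ereal (2 * H * \<eta> powr mu)"
    using H0 st assms(2) by (simp add: powr_mono2 mult_left_mono)
  finally show "Nint f \<sigma> \<tau> \<le> ereal (2 * H * \<eta> powr mu)" .
qed

lemma tilde_semi_le_twice_holder_semi:
  fixes f :: "real \<Rightarrow> 'a::metric_space"
  assumes "cadlag01 f" "0 \<le> mu"
  shows "tilde_semi mu f \<le> 2 * holder_semi mu f"
proof (cases "holder_semi mu f")
  case (real H)
  have "Neta f \<eta> / ereal (\<eta> powr mu) \<le> ereal (2 * H)" if "0 < \<eta>" for \<eta>
  proof -
    have pos: "0 < \<eta> powr mu" using that by simp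
    have "Neta f \<eta> / ereal (\<eta> powr mu) \<le> ereal (2 * H * \<eta> powr mu) / ereal (\<eta> powr mu)"
      using Neta_le_holder_semi[OF assms real] pos by (intro ereal_divide_right_mono) auto
    also have "\<dots> = ereal (2 * H)" using pos by simp
    finally show ?thesis .
  qed
  thus ?thesis using real by (auto simp: tilde_semi_def intro!: SUP_least)
next
  case PInf
  thus ?thesis by simp
next
  case MInf
  thus ?thesis using holder_semi_nonneg[of mu f] by simp
qed

theorem lemma1:
  fixes f :: "real \<Rightarrow> 'a::polish_space" and mu :: real
  assumes "0 < mu" and "mu < 1" and "f \<in> Dmu mu"
  shows "ereal (1/2) * tilde_semi mu f \<le> holder_semi mu f \<and>
         holder_semi mu f \<le> 2 * tilde_semi mu f"
proof
  have "cadlag01 f" using assms(3) by (simp add: Dmu_def)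
  hence "ereal (1/2) * tilde_semi mu f \<le> ereal (1/2) * (2 * holder_semi mu f)"
    using assms(1) by (intro ereal_mult_left_mono tilde_semi_le_twice_holder_semi) auto
  also have "\<dots> = holder_semi mu f"
    by (cases "holder_semi mu f") auto
  finally show "ereal (1/2) * tilde_semi mu f \<le> holder_semi mu f" .
  have "tilde_semi mu f \<le> 2 * tilde_semi mu f"
    using tilde_semi_nonneg[of mu f] by (cases "tilde_semi mu f") auto
  thus "holder_semi mu f \<le> 2 * tilde_semi mu f"
    using holder_semi_le_tilde_semi[of mu f] by simp
qed

end
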